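(* For $|z_1|,|z_2|<1$, integers $i,j\ge0$ and $k_1,\ldots,k_{i+j}\ge1$ with $i+j\ge1$ (all 2MPLs below in the variables $(z_1,z_2)$): $$\frac{\partial}{\partial z_1}\mathrm{Li}_{k_1,\ldots,k_{i+j}}(i,j)=\begin{cases}\frac{z_2}{1-z_1z_2}\mathrm{Li}_{k_2,\ldots,k_j}(0,j-1)&(i=0,k_1=1),\\ \frac1{1-z_1}\mathrm{Li}_{k_2,\ldots,k_{i+j}}(i-1,j)&(i>0,k_1=1),\\ \frac1{z_1}\mathrm{Li}_{k_1-1,k_2,\ldots,k_{i+j}}(i,j)&(k_1>1),\end{cases}$$ and, if $j\ge1$, $$\frac{\partial}{\partial z_2}\mathrm{Li}_{k_1,\ldots,k_{i+j}}(i,j)=\begin{cases}\frac{z_1}{1-z_1z_2}\mathrm{Li}_{k_2,\ldots,k_j}(0,j-1)&(i=0,k_1=1),\\ \frac1{1-z_2}\mathrm{Li}_{\mathbf k'}(i,j-1)-\frac1{1-z_2}\mathrm{Li}_{\mathbf k'}(i-1,j)-\frac1{z_2}\mathrm{Li}_{\mathbf k'}(i-1,j)&(i>0,k_{i+1}=1),\\ \frac1{z_2}\mathrm{Li}_{k_1,\ldots,k_i,k_{i+1}-1,k_{i+2},\ldots,k_{i+j}}(i,j)&(k_{i+1}>1),\end{cases}$$ where $\mathbf k'=(k_1,\ldots,k_i,k_{i+2},\ldots,k_{i+j})$.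
   Context: For integers $i,j\ge0$, $k_1,\ldots,k_{i+j}\ge1$ and $|z_1|,|z_2|<1$, the multiple polylogarithm of two variables (2MPL) of main variable $z_1$ is $$\mathrm{Li}_{k_1,\ldots,k_{i+j}}(i,j;z_1,z_2)=\sum_{n_1>n_2>\cdots>n_{i+j}>0}\frac{z_1^{n_1}z_2^{n_{i+1}}}{n_1^{k_1}\cdots n_{i+j}^{k_{i+j}}},$$ with the factor $z_2^{n_{i+1}}$ omitted when $j=0$; the empty 2MPL $\mathrm{Li}_\emptyset(0,0;z_1,z_2)$ equals $1$. *)

theory Defs
  imports "HOL-Analysis.Analysis"
begin

definition dec_tuples :: "nat \<Rightarrow> nat list set" where
  "dec_tuples m = {ns. length ns = m \<and> sorted_wrt (>) ns \<and> (\<forall>n\<in>set ns. 0 < n)}"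

text \<open>The factor z2^{n_{i+1}}
  (0-based: ns ! i) is omitted when j = 0; the empty 2MPL equals 1.\<close>
definition Li2 :: "nat list \<Rightarrow> nat \<Rightarrow> nat \<Rightarrow> complex \<Rightarrow> complex \<Rightarrow> complex" where
  "Li2 ks i j z1 z2 =
     (if ks = [] then 1 else
      (\<Sum>\<^sub>\<infinity> ns \<in> dec_tuples (length ks).
         z1 ^ (ns ! 0) * (if j = 0 then 1 else z2 ^ (ns ! i))
         / (\<Prod>l<length ks. of_nat (ns ! l) ^ (ks ! l))))"

end

theory Submission
  imports Defs "HOL-Complex_Analysis.Complex_Analysis"
begin

text \<open>Each 2MPL is a power series over the strictly decreasing tuples
  n_1 > ... > n_{i+j} > 0, dominated near any point of the unit disc by r^{n_1} with r < 1, so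
  it may be differentiated termwise. Differentiating z^n / n^k gives z^{n-1} / n^{k-1}. If k > 1
  this is again a 2MPL summand, divided by z. If k = 1 the index n disappears from the
  denominator, and summing z^{n-1} over the values of n allowed by the neighbouring indices is a
  geometric sum: over n > n_2 for the leading index it produces the factor 1/(1 - z)
  (with z = z_1 z_2 when i = 0), over n_{i+2} < n < n_i for the index carrying z_2 it produces
  the difference of two 2MPLs of lower depth.\<close>

section \<open>Termwise differentiation and geometric sums\<close>

text \<open>No summability of the derivatives is assumed: the uniform limit theorem for
  holomorphic functions makes their partial sums converge.\<close>
lemma has_field_derivative_infsum:
  fixes f f' :: "'a \<Rightarrow> complex \<Rightarrow> complex" and M :: "'a \<Rightarrow> real"
  assumes "r > 0"
    and deriv: "\<And>x w. x \<in> I \<Longrightarrow> (f x has_field_derivative f' x w) (at w)"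
    and bound: "\<And>x w. x \<in> I \<Longrightarrow> w \<in> cball z r \<Longrightarrow> norm (f x w) \<le> M x"
    and "M summable_on I"
  shows "(\<lambda>x. f' x z) summable_on I"
    and "((\<lambda>w. \<Sum>\<^sub>\<infinity>x\<in>I. f x w) has_field_derivative (\<Sum>\<^sub>\<infinity>x\<in>I. f' x z)) (at z)"
proof -
  let ?F = "finite_subsets_at_top I"
  have ulim: "uniform_limit (cball z r) (\<lambda>X w. \<Sum>x\<in>X. f x w) (\<lambda>w. \<Sum>\<^sub>\<infinity>x\<in>I. f x w) ?F"
    using bound \<open>M summable_on I\<close> by (rule Weierstrass_m_test_general)
  have cont: "\<forall>\<^sub>F X in ?F. continuous_on (cball z r) (\<lambda>w. \<Sum>x\<in>X. f x w) \<and>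
      (\<forall>w\<in>ball z r. ((\<lambda>w. \<Sum>x\<in>X. f x w) has_field_derivative (\<Sum>x\<in>X. f' x w)) (at w))"
  proof (rule eventually_finite_subsets_at_top_weakI)
    fix X assume "finite X" "X \<subseteq> I"
    then have "((\<lambda>w. \<Sum>x\<in>X. f x w) has_field_derivative (\<Sum>x\<in>X. f' x w)) (at w)" for w
      using deriv by (intro DERIV_sum) auto
    then show "continuous_on (cball z r) (\<lambda>w. \<Sum>x\<in>X. f x w) \<and>
      (\<forall>w\<in>ball z r. ((\<lambda>w. \<Sum>x\<in>X. f x w) has_field_derivative (\<Sum>x\<in>X. f' x w)) (at w))"
      by (auto intro!: continuous_at_imp_continuous_on DERIV_isCont)
  qed
  obtain g' where
    "\<And>w. w \<in> ball z r \<Longrightarrow> ((\<lambda>w. \<Sum>\<^sub>\<infinity>x\<in>I. f x w) has_field_derivative g' w) (at w) \<and>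
       ((\<lambda>X. \<Sum>x\<in>X. f' x w) \<longlongrightarrow> g' w) ?F"
    using has_complex_derivative_uniform_limit[OF cont ulim finite_subsets_at_top_neq_bot \<open>r > 0\<close>]
    by blast
  then have "((\<lambda>w. \<Sum>\<^sub>\<infinity>x\<in>I. f x w) has_field_derivative g' z) (at z)"
    and "((\<lambda>x. f' x z) has_sum g' z) I"
    using \<open>r > 0\<close> by (simp_all add: has_sum_def)
  then show "(\<lambda>x. f' x z) summable_on I"
    and "((\<lambda>w. \<Sum>\<^sub>\<infinity>x\<in>I. f x w) has_field_derivative (\<Sum>\<^sub>\<infinity>x\<in>I. f' x z)) (at z)"
    by (auto simp: summable_on_def infsumI)
qed

lemma has_sum_diff:
  fixes f g :: "'a \<Rightarrow> 'b :: topological_ab_group_add"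
  assumes "(f has_sum a) A" and "(g has_sum b) A"
  shows "((\<lambda>x. f x - g x) has_sum (a - b)) A"
  using has_sum_add[OF assms(1) has_sum_uminus[where a = "- b", THEN iffD2]] assms(2) by simp

lemma has_sum_geometric_greaterThan:
  fixes q :: "'a :: {real_normed_field, banach}"
  assumes "norm q < 1"
  shows "((\<lambda>n. q ^ (n - 1)) has_sum (q ^ a / (1 - q))) {a<..}"
proof -
  have "((\<lambda>n. q ^ n) has_sum (1 / (1 - q))) UNIV"
    using assms by (intro norm_summable_imp_has_sum geometric_sums)
      (auto simp: norm_power intro!: summable_geometric)
  then have "((\<lambda>n. q ^ a * q ^ n) has_sum (q ^ a / (1 - q))) UNIV"
    using has_sum_cmult_right by fastforce
  also have "?this \<longleftrightarrow> ?thesis"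
    by (intro has_sum_reindex_bij_witness[of _ "\<lambda>n. n - a - 1" "\<lambda>k. k + a + 1"])
      (auto simp: power_add)
  finally show ?thesis .
qed

lemma sum_geometric_greaterThanLessThan:
  fixes q :: "'a :: field"
  assumes "q \<noteq> 1" and "a < b"
  shows "(\<Sum>n\<in>{a<..<b}. q ^ (n - 1)) = (q ^ a - q ^ (b - 1)) / (1 - q)"
proof (cases "b = Suc a")
  case False
  with \<open>a < b\<close> have "\<exists>c. b = a + c + 2"
    by presburger
  then obtain c where b: "b = a + c + 2" ..
  have "(\<Sum>n\<in>{a<..<b}. q ^ (n - 1)) = (\<Sum>k=a..a + c. q ^ k)"
    unfolding b by (intro sum.reindex_bij_witness[of _ "\<lambda>k. k + 1" "\<lambda>n. n - 1"]) auto
  also have "\<dots> = (q ^ a - q ^ (b - 1)) / (1 - q)"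
    using \<open>q \<noteq> 1\<close> by (simp add: sum_gp b)
  finally show ?thesis .
qed simp

section \<open>Strictly decreasing tuples\<close>

definition insert_nth :: "nat \<Rightarrow> 'a \<Rightarrow> 'a list \<Rightarrow> 'a list" where
  "insert_nth p x xs = take p xs @ x # drop p xs"

definition remove_nth :: "nat \<Rightarrow> 'a list \<Rightarrow> 'a list" where
  "remove_nth p xs = take p xs @ drop (Suc p) xs"

lemma insert_nth_0 [simp]: "insert_nth 0 x xs = x # xs"
  by (simp add: insert_nth_def)

lemma length_insert_nth [simp]: "p \<le> length xs \<Longrightarrow> length (insert_nth p x xs) = Suc (length xs)"
  by (simp add: insert_nth_def)

lemma length_remove_nth [simp]: "p < length xs \<Longrightarrow> length (remove_nth p xs) = length xs - 1"
  by (simp add: remove_nth_def)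

lemma nth_insert_nth_same [simp]: "p \<le> length xs \<Longrightarrow> insert_nth p x xs ! p = x"
  by (simp add: insert_nth_def nth_append)

lemma remove_nth_insert_nth [simp]: "p \<le> length xs \<Longrightarrow> remove_nth p (insert_nth p x xs) = xs"
  by (simp add: insert_nth_def remove_nth_def)

lemma insert_nth_remove_nth: "p < length xs \<Longrightarrow> insert_nth p (xs ! p) (remove_nth p xs) = xs"
  by (simp add: insert_nth_def remove_nth_def id_take_nth_drop[symmetric])

lemma remove_nth_list_update [simp]: "remove_nth p (xs[p := x]) = remove_nth p xs"
  by (simp add: remove_nth_def)

text \<open>The leading index n_1, taken to be 0 for the empty tuple so that the empty 2MPL
  equals 1 without a case distinction.\<close>
definition hd_or_zero :: "nat list \<Rightarrow> nat" where
  "hd_or_zero t = (if t = [] then 0 else hd t)"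

lemma hd_or_zero_Cons [simp]: "hd_or_zero (n # t) = n"
  by (simp add: hd_or_zero_def)

lemma hd_or_zero_conv_nth: "t \<noteq> [] \<Longrightarrow> hd_or_zero t = t ! 0"
  by (simp add: hd_or_zero_def hd_conv_nth)

lemma hd_or_zero_insert_nth: "0 < p \<Longrightarrow> t \<noteq> [] \<Longrightarrow> hd_or_zero (insert_nth p x t) = hd_or_zero t"
  by (simp add: hd_or_zero_def insert_nth_def)

lemma dec_tuples_0 [simp]: "dec_tuples 0 = {[]}"
  by (auto simp: dec_tuples_def)

lemma dec_tuples_nth_le:
  assumes "t \<in> dec_tuples m" and "p \<le> q" and "q < m"
  shows "t ! q \<le> t ! p"
  using assms by (cases "p = q") (auto simp: dec_tuples_def sorted_wrt_iff_nth_less less_imp_le)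

definition insertion_range :: "nat \<Rightarrow> nat list \<Rightarrow> nat set" where
  "insertion_range p t =
     {n. (if p < length t then t ! p else 0) < n \<and> (0 < p \<longrightarrow> n < t ! (p - 1))}"

lemma insertion_range_0: "insertion_range 0 t = {hd_or_zero t<..}"
  by (auto simp: insertion_range_def hd_or_zero_def hd_conv_nth)

lemma insert_nth_in_dec_tuples:
  assumes t: "t \<in> dec_tuples m" and "p \<le> m" and n: "n \<in> insertion_range p t"
  shows "insert_nth p n t \<in> dec_tuples (Suc m)"
proof -
  have len: "length t = m" and sorted: "sorted_wrt (>) t" and pos: "\<forall>x\<in>set t. 0 < x"
    using t by (auto simp: dec_tuples_def)
  have before: "n < x" if "x \<in> set (take p t)" for x
  proof -
    obtain k where "k < p" "k < m" "x = t ! k"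
      using \<open>x \<in> set (take p t)\<close> len by (auto simp: in_set_conv_nth)
    moreover have "t ! (p - 1) \<le> t ! k"
      using \<open>k < p\<close> \<open>p \<le> m\<close> by (intro dec_tuples_nth_le[OF t]) auto
    ultimately show ?thesis
      using n by (auto simp: insertion_range_def)
  qed
  have after: "x < n" if "x \<in> set (drop p t)" for x
  proof -
    obtain k where "k < m - p" "x = t ! (p + k)"
      using \<open>x \<in> set (drop p t)\<close> \<open>p \<le> m\<close> len by (auto simp: in_set_conv_nth)
    moreover have "t ! (p + k) \<le> t ! p"
      using \<open>k < m - p\<close> by (intro dec_tuples_nth_le[OF t]) auto
    ultimately show ?thesis
      using n len by (auto simp: insertion_range_def split: if_splits)
  qed
  have "\<forall>x\<in>set (take p t). \<forall>y\<in>set (drop p t). y < x"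
    using sorted by (metis append_take_drop_id sorted_wrt_append)
  with sorted before after have "sorted_wrt (>) (insert_nth p n t)"
    by (auto simp: insert_nth_def sorted_wrt_append sorted_wrt_take sorted_wrt_drop)
  moreover have "0 < n"
    using n by (auto simp: insertion_range_def split: if_splits)
  ultimately show ?thesis
    using pos len \<open>p \<le> m\<close> by (auto simp: dec_tuples_def insert_nth_def dest: in_set_takeD in_set_dropD)
qed

lemma remove_nth_in_dec_tuples:
  assumes ns: "ns \<in> dec_tuples (Suc m)" and "p \<le> m"
  shows "remove_nth p ns \<in> dec_tuples m"
    and "ns ! p \<in> insertion_range p (remove_nth p ns)"
proof -
  have len: "length ns = Suc m" and sorted: "sorted_wrt (>) ns" and pos: "\<forall>x\<in>set ns. 0 < x"
    using ns by (auto simp: dec_tuples_def)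
  have "sorted_wrt (>) (take p ns @ drop p ns)"
    using sorted by simp
  moreover have "set (drop (Suc p) ns) \<subseteq> set (drop p ns)"
    by (simp add: set_drop_subset_set_drop)
  ultimately have "sorted_wrt (>) (remove_nth p ns)"
    unfolding remove_nth_def sorted_wrt_append using sorted by (auto simp: sorted_wrt_drop)
  then show "remove_nth p ns \<in> dec_tuples m"
    using pos len \<open>p \<le> m\<close> by (auto simp: dec_tuples_def remove_nth_def dest: in_set_takeD in_set_dropD)
  have "remove_nth p ns ! p < ns ! p" if "p < m"
    using that len sorted by (simp add: remove_nth_def nth_append sorted_wrt_iff_nth_less)
  moreover have "ns ! p < remove_nth p ns ! (p - 1)" if "0 < p"
    using that len \<open>p \<le> m\<close> sorted by (simp add: remove_nth_def nth_append sorted_wrt_iff_nth_less)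
  moreover have "0 < ns ! p"
    using pos len \<open>p \<le> m\<close> by simp
  ultimately show "ns ! p \<in> insertion_range p (remove_nth p ns)"
    using len \<open>p \<le> m\<close> by (auto simp: insertion_range_def)
qed

lemma bij_betw_insert_nth_dec_tuples:
  assumes "p \<le> m"
  shows "bij_betw (\<lambda>(t, n). insert_nth p n t)
           (SIGMA t:dec_tuples m. insertion_range p t) (dec_tuples (Suc m))"
proof (rule bij_betw_byWitness[where f' = "\<lambda>ns. (remove_nth p ns, ns ! p)"])
  have len: "length t = m" if "t \<in> dec_tuples m" for t m
    using that by (simp add: dec_tuples_def)
  show "\<forall>x\<in>SIGMA t:dec_tuples m. insertion_range p t.
          (\<lambda>ns. (remove_nth p ns, ns ! p)) ((\<lambda>(t, n). insert_nth p n t) x) = x"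
    using assms by (auto dest: len)
  show "\<forall>ns\<in>dec_tuples (Suc m). (\<lambda>(t, n). insert_nth p n t) (remove_nth p ns, ns ! p) = ns"
    using assms by (auto simp: insert_nth_remove_nth dest: len)
  show "(\<lambda>(t, n). insert_nth p n t) ` (SIGMA t:dec_tuples m. insertion_range p t) \<subseteq> dec_tuples (Suc m)"
    using assms by (auto intro: insert_nth_in_dec_tuples)
  show "(\<lambda>ns. (remove_nth p ns, ns ! p)) ` dec_tuples (Suc m) \<subseteq> (SIGMA t:dec_tuples m. insertion_range p t)"
    using assms by (auto intro: remove_nth_in_dec_tuples)
qed

lemma infsum_dec_tuples_Suc:
  fixes f :: "nat list \<Rightarrow> 'a :: banach"
  assumes "p \<le> m" and "f summable_on dec_tuples (Suc m)"
  shows "infsum f (dec_tuples (Suc m)) =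
           (\<Sum>\<^sub>\<infinity>t\<in>dec_tuples m. \<Sum>\<^sub>\<infinity>n\<in>insertion_range p t. f (insert_nth p n t))"
proof -
  note bij = bij_betw_insert_nth_dec_tuples[OF \<open>p \<le> m\<close>]
  have "(\<lambda>x. f ((\<lambda>(t, n). insert_nth p n t) x)) summable_on (SIGMA t:dec_tuples m. insertion_range p t)"
    using summable_on_reindex_bij_betw[OF bij] assms(2) by blast
  then have "(\<Sum>\<^sub>\<infinity>t\<in>dec_tuples m. \<Sum>\<^sub>\<infinity>n\<in>insertion_range p t. f (insert_nth p n t)) =
      infsum (\<lambda>x. f ((\<lambda>(t, n). insert_nth p n t) x)) (SIGMA t:dec_tuples m. insertion_range p t)"
    by (subst infsum_Sigma_banach[symmetric]) simp_all
  also have "\<dots> = infsum f (dec_tuples (Suc m))"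
    by (rule infsum_reindex_bij_betw[OF bij])
  finally show ?thesis ..
qed

lemma summable_on_dec_tuples_power_hd:
  fixes r :: real
  assumes "0 \<le> r" and "r < 1"
  shows "(\<lambda>t. r ^ hd_or_zero t) summable_on dec_tuples m"
proof (induction m)
  case (Suc m)
  have "((\<lambda>n. r ^ n) has_sum (r * (r ^ hd_or_zero t / (1 - r)))) {hd_or_zero t<..}" for t
  proof -
    have "((\<lambda>n. r * r ^ (n - 1)) has_sum (r * (r ^ hd_or_zero t / (1 - r)))) {hd_or_zero t<..}"
      using assms by (intro has_sum_cmult_right has_sum_geometric_greaterThan) auto
    then show ?thesis
      by (rule has_sum_cong[THEN iffD1, rotated]) (simp add: power_eq_if)
  qed
  moreover have "(\<lambda>t. r * (r ^ hd_or_zero t / (1 - r))) summable_on dec_tuples m"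
    using summable_on_cmult_right[OF summable_on_cmult_left[OF Suc.IH], of r "1 / (1 - r)"]
    by simp
  ultimately have "(\<lambda>(t, n). r ^ hd_or_zero (insert_nth 0 n t)) summable_on
      (SIGMA t:dec_tuples m. insertion_range 0 t)"
    using assms by (intro summable_on_SigmaI) (auto simp: insertion_range_0)
  then show ?case
    using summable_on_reindex_bij_betw[OF bij_betw_insert_nth_dec_tuples[of 0 m],
        where f = "\<lambda>t. r ^ hd_or_zero t"]
    by (simp add: case_prod_unfold)
qed simp

lemma infsum_dec_tuples_Suc_geometric_head:
  fixes q :: "'a :: {real_normed_field, banach}"
  assumes "norm q < 1" and "f summable_on dec_tuples (Suc m)"
    and f: "\<And>t n. t \<in> dec_tuples m \<Longrightarrow> hd_or_zero t < n \<Longrightarrow> f (n # t) = q ^ (n - 1) * g t"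
  shows "infsum f (dec_tuples (Suc m)) = 1 / (1 - q) * (\<Sum>\<^sub>\<infinity>t\<in>dec_tuples m. q ^ hd_or_zero t * g t)"
proof -
  have "infsum f (dec_tuples (Suc m)) = (\<Sum>\<^sub>\<infinity>t\<in>dec_tuples m. \<Sum>\<^sub>\<infinity>n\<in>{hd_or_zero t<..}. f (n # t))"
    using infsum_dec_tuples_Suc[of 0 m f] assms(2) by (simp add: insertion_range_0)
  also have "\<dots> = (\<Sum>\<^sub>\<infinity>t\<in>dec_tuples m. 1 / (1 - q) * (q ^ hd_or_zero t * g t))"
  proof (rule infsum_cong)
    fix t assume t: "t \<in> dec_tuples m"
    have "((\<lambda>n. q ^ (n - 1) * g t) has_sum (q ^ hd_or_zero t / (1 - q) * g t)) {hd_or_zero t<..}"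
      using \<open>norm q < 1\<close> by (intro has_sum_cmult_left has_sum_geometric_greaterThan)
    then have "(\<Sum>\<^sub>\<infinity>n\<in>{hd_or_zero t<..}. q ^ (n - 1) * g t) = 1 / (1 - q) * (q ^ hd_or_zero t * g t)"
      by (simp add: infsumI)
    moreover have "(\<Sum>\<^sub>\<infinity>n\<in>{hd_or_zero t<..}. f (n # t)) = (\<Sum>\<^sub>\<infinity>n\<in>{hd_or_zero t<..}. q ^ (n - 1) * g t)"
      using f[OF t] by (intro infsum_cong) simp
    ultimately show "(\<Sum>\<^sub>\<infinity>n\<in>{hd_or_zero t<..}. f (n # t)) = 1 / (1 - q) * (q ^ hd_or_zero t * g t)"
      by simp
  qed
  also have "\<dots> = 1 / (1 - q) * (\<Sum>\<^sub>\<infinity>t\<in>dec_tuples m. q ^ hd_or_zero t * g t)"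
    by (rule infsum_cmult_right')
  finally show ?thesis .
qed

section \<open>Summands of a 2MPL\<close>

definition mpl_denom :: "nat list \<Rightarrow> nat list \<Rightarrow> complex" where
  "mpl_denom ks ns = (\<Prod>(k, n)\<leftarrow>zip ks ns. of_nat n ^ k)"

lemma mpl_denom_Nil [simp]: "mpl_denom [] ns = 1"
  by (simp add: mpl_denom_def)

lemma mpl_denom_Cons [simp]: "mpl_denom (k # ks) (n # ns) = of_nat n ^ k * mpl_denom ks ns"
  by (simp add: mpl_denom_def)

lemma mpl_denom_remove_nth:
  assumes "length ns = length ks" and "q < length ks"
  shows "mpl_denom ks ns = of_nat (ns ! q) ^ (ks ! q) * mpl_denom (remove_nth q ks) (remove_nth q ns)"
proof -
  have "zip ks ns = zip (take q ks) (take q ns) @ (ks ! q, ns ! q) # zip (drop (Suc q) ks) (drop (Suc q) ns)"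
    using assms by (simp add: zip_append[symmetric] Cons_nth_drop_Suc flip: zip_Cons_Cons)
  then show ?thesis
    using assms by (simp add: mpl_denom_def remove_nth_def zip_append)
qed

lemma mpl_denom_lower:
  assumes "length ns = length ks" and "q < length ks" and "0 < ks ! q"
  shows "mpl_denom ks ns = of_nat (ns ! q) * mpl_denom (ks[q := ks ! q - 1]) ns"
  using assms mpl_denom_remove_nth[of ns ks q] mpl_denom_remove_nth[of ns "ks[q := ks ! q - 1]" q]
  by (simp add: power_eq_if)

lemma mpl_denom_insert_nth:
  assumes "length ks = Suc (length t)" and "p < length ks"
  shows "mpl_denom ks (insert_nth p n t) = of_nat n ^ (ks ! p) * mpl_denom (remove_nth p ks) t"
  using assms mpl_denom_remove_nth[of "insert_nth p n t" ks p] by simp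

lemma norm_mpl_denom_ge_1: "\<forall>n\<in>set ns. 0 < n \<Longrightarrow> 1 \<le> norm (mpl_denom ks ns)"
proof (induction ks arbitrary: ns)
  case (Cons k ks)
  show ?case
  proof (cases ns)
    case (Cons n ns')
    then have "1 \<le> real n ^ k" and "1 \<le> norm (mpl_denom ks ns')"
      using Cons.prems Cons.IH[of ns'] by (simp_all add: one_le_power Suc_le_eq)
    then show ?thesis
      using Cons mult_mono[of 1 "real n ^ k" 1 "norm (mpl_denom ks ns')"]
      by (simp add: norm_mult norm_power)
  qed (simp add: mpl_denom_def)
qed simp

definition mpl_term :: "nat list \<Rightarrow> nat \<Rightarrow> nat \<Rightarrow> complex \<Rightarrow> complex \<Rightarrow> nat list \<Rightarrow> complex" where
  "mpl_term ks i j z1 z2 ns =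
     z1 ^ hd_or_zero ns * (if j = 0 then 1 else z2 ^ (ns ! i)) / mpl_denom ks ns"

lemma Li2_eq_infsum:
  assumes "ks \<noteq> [] \<or> j = 0"
  shows "Li2 ks i j z1 z2 = infsum (mpl_term ks i j z1 z2) (dec_tuples (length ks))"
proof (cases "ks = []")
  case False
  have "z1 ^ (ns ! 0) * (if j = 0 then 1 else z2 ^ (ns ! i)) /
      (\<Prod>l<length ks. of_nat (ns ! l) ^ (ks ! l)) = mpl_term ks i j z1 z2 ns"
    if "ns \<in> dec_tuples (length ks)" for ns
  proof -
    have "length ns = length ks" and "ns \<noteq> []"
      using that False by (auto simp: dec_tuples_def)
    then show ?thesis
      using False
      by (simp add: mpl_term_def mpl_denom_def prod.list_conv_set_nth hd_or_zero_conv_nth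
          atLeast0LessThan)
  qed
  then show ?thesis
    using False by (simp add: Li2_def cong: infsum_cong)
qed (use assms in \<open>simp add: Li2_def mpl_term_def hd_or_zero_def\<close>)

lemma norm_mpl_term_le:
  assumes "\<forall>n\<in>set ns. 0 < n" and "norm z2 \<le> 1"
  shows "norm (mpl_term ks i j z1 z2 ns) \<le> norm z1 ^ hd_or_zero ns"
proof -
  have "norm (if j = 0 then 1 else z2 ^ (ns ! i)) \<le> 1"
    using assms(2) by (simp add: norm_power power_le_one)
  moreover have "1 \<le> norm (mpl_denom ks ns)"
    using assms(1) by (rule norm_mpl_denom_ge_1)
  ultimately have "norm z1 ^ hd_or_zero ns * norm (if j = 0 then 1 else z2 ^ (ns ! i)) / norm (mpl_denom ks ns)
      \<le> norm z1 ^ hd_or_zero ns * 1 / 1"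
    by (intro frac_le mult_left_mono) auto
  then show ?thesis
    by (simp add: mpl_term_def norm_divide norm_mult norm_power)
qed

lemma has_sum_Li2:
  assumes "ks \<noteq> [] \<or> j = 0" and "norm z1 < 1" and "norm z2 \<le> 1"
  shows "(mpl_term ks i j z1 z2 has_sum Li2 ks i j z1 z2) (dec_tuples (length ks))"
proof -
  have "(\<lambda>ns. norm z1 ^ hd_or_zero ns) summable_on dec_tuples (length ks)"
    using assms(2) by (intro summable_on_dec_tuples_power_hd) auto
  then have "(\<lambda>ns. norm (mpl_term ks i j z1 z2 ns)) summable_on dec_tuples (length ks)"
    by (rule summable_on_comparison_test) (use norm_mpl_term_le assms(3) in \<open>auto simp: dec_tuples_def\<close>)
  then show ?thesis
    using assms(1) by (simp add: Li2_eq_infsum abs_summable_summable)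
qed

lemma Li2_0_commute: "ks = [] \<or> j \<noteq> 0 \<Longrightarrow> Li2 ks 0 j z1 z2 = Li2 ks 0 j z2 z1"
  by (auto simp: Li2_def mult.commute)

section \<open>Derivatives\<close>

text \<open>Derivatives of the summands, with the factor n produced by differentiating z^n
  absorbed into the denominator by lowering the corresponding exponent k.\<close>
definition mpl_term_dz1 :: "nat list \<Rightarrow> nat \<Rightarrow> nat \<Rightarrow> complex \<Rightarrow> complex \<Rightarrow> nat list \<Rightarrow> complex" where
  "mpl_term_dz1 ks i j z1 z2 ns =
     z1 ^ (hd_or_zero ns - 1) * (if j = 0 then 1 else z2 ^ (ns ! i)) / mpl_denom (ks[0 := ks ! 0 - 1]) ns"

definition mpl_term_dz2 :: "nat list \<Rightarrow> nat \<Rightarrow> complex \<Rightarrow> complex \<Rightarrow> nat list \<Rightarrow> complex" where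
  "mpl_term_dz2 ks i z1 z2 ns =
     z1 ^ hd_or_zero ns * z2 ^ (ns ! i - 1) / mpl_denom (ks[i := ks ! i - 1]) ns"

lemma mpl_term_has_field_derivative_z1:
  assumes "ns \<in> dec_tuples (length ks)" and "ks \<noteq> []" and "0 < ks ! 0"
  shows "((\<lambda>w. mpl_term ks i j w z2 ns) has_field_derivative mpl_term_dz1 ks i j z z2 ns) (at z)"
proof -
  have "length ns = length ks" and "ns \<noteq> []" and pos: "\<forall>n\<in>set ns. 0 < n"
    using assms(1,2) by (auto simp: dec_tuples_def)
  then have "mpl_denom ks ns = of_nat (hd_or_zero ns) * mpl_denom (ks[0 := ks ! 0 - 1]) ns"
    using assms(2,3) mpl_denom_lower[of ns ks 0] by (simp add: hd_or_zero_conv_nth)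
  moreover have "mpl_denom ks ns \<noteq> 0"
    using norm_mpl_denom_ge_1[OF pos, of ks] by auto
  ultimately show ?thesis
    unfolding mpl_term_def mpl_term_dz1_def
    by (auto intro!: derivative_eq_intros)
qed

lemma mpl_term_has_field_derivative_z2:
  assumes "ns \<in> dec_tuples (length ks)" and "i < length ks" and "0 < ks ! i" and "j \<noteq> 0"
  shows "((\<lambda>w. mpl_term ks i j z1 w ns) has_field_derivative mpl_term_dz2 ks i z1 z ns) (at z)"
proof -
  have "length ns = length ks" and pos: "\<forall>n\<in>set ns. 0 < n"
    using assms(1) by (auto simp: dec_tuples_def)
  then have "mpl_denom ks ns = of_nat (ns ! i) * mpl_denom (ks[i := ks ! i - 1]) ns"
    using assms(2,3) by (simp add: mpl_denom_lower)
  moreover have "mpl_denom ks ns \<noteq> 0"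
    using norm_mpl_denom_ge_1[OF pos, of ks] by auto
  ultimately show ?thesis
    unfolding mpl_term_def mpl_term_dz2_def
    using assms(4) by (auto intro!: derivative_eq_intros)
qed

lemma Li2_has_field_derivative_z1:
  assumes "norm z1 < 1" and "norm z2 \<le> 1" and "ks \<noteq> []" and "0 < ks ! 0"
  shows "mpl_term_dz1 ks i j z1 z2 summable_on dec_tuples (length ks)"
    and "((\<lambda>w. Li2 ks i j w z2) has_field_derivative
           infsum (mpl_term_dz1 ks i j z1 z2) (dec_tuples (length ks))) (at z1)"
proof -
  define \<rho> where "\<rho> = (1 + norm z1) / 2"
  have bound: "norm (mpl_term ks i j w z2 ns) \<le> \<rho> ^ hd_or_zero ns"
    if "ns \<in> dec_tuples (length ks)" and "w \<in> cball z1 ((1 - norm z1) / 2)" for ns w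
  proof -
    have "norm w \<le> \<rho>"
      using that(2) norm_triangle_sub[of w z1] by (auto simp: \<rho>_def dist_norm norm_minus_commute)
    then have "norm w ^ hd_or_zero ns \<le> \<rho> ^ hd_or_zero ns"
      by (simp add: power_mono)
    then show ?thesis
      using norm_mpl_term_le[of ns z2 ks i j w] that(1) assms(2) by (auto simp: dec_tuples_def)
  qed
  have summable: "(\<lambda>ns. \<rho> ^ hd_or_zero ns) summable_on dec_tuples (length ks)"
    using assms(1) by (intro summable_on_dec_tuples_power_hd) (auto simp: \<rho>_def)
  have "0 < (1 - norm z1) / 2"
    using assms(1) by simp
  note termwise = has_field_derivative_infsum[where f = "\<lambda>ns w. mpl_term ks i j w z2 ns"
      and f' = "\<lambda>ns w. mpl_term_dz1 ks i j w z2 ns" and z = z1,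
      OF this mpl_term_has_field_derivative_z1[OF _ assms(3,4)] bound summable]
  show "mpl_term_dz1 ks i j z1 z2 summable_on dec_tuples (length ks)"
    using termwise(1) .
  show "((\<lambda>w. Li2 ks i j w z2) has_field_derivative
           infsum (mpl_term_dz1 ks i j z1 z2) (dec_tuples (length ks))) (at z1)"
    using termwise(2) assms(3) by (simp add: Li2_eq_infsum)
qed

lemma Li2_has_field_derivative_z2:
  assumes "norm z1 < 1" and "norm z2 < 1" and "i < length ks" and "0 < ks ! i" and "j \<noteq> 0"
  shows "mpl_term_dz2 ks i z1 z2 summable_on dec_tuples (length ks)"
    and "((\<lambda>w. Li2 ks i j z1 w) has_field_derivative
           infsum (mpl_term_dz2 ks i z1 z2) (dec_tuples (length ks))) (at z2)"
proof -
  have bound: "norm (mpl_term ks i j z1 w ns) \<le> norm z1 ^ hd_or_zero ns"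
    if "ns \<in> dec_tuples (length ks)" and "w \<in> cball z2 ((1 - norm z2) / 2)" for ns w
  proof -
    have "norm w \<le> 1"
      using that(2) norm_triangle_sub[of w z2] assms(2) by (auto simp: dist_norm norm_minus_commute)
    then show ?thesis
      using norm_mpl_term_le[of ns w ks i j z1] that(1) by (auto simp: dec_tuples_def)
  qed
  have summable: "(\<lambda>ns. norm z1 ^ hd_or_zero ns) summable_on dec_tuples (length ks)"
    using assms(1) by (intro summable_on_dec_tuples_power_hd) auto
  have "ks \<noteq> []"
    using assms(3) by auto
  have "0 < (1 - norm z2) / 2"
    using assms(2) by simp
  note termwise = has_field_derivative_infsum[where f = "\<lambda>ns w. mpl_term ks i j z1 w ns"
      and f' = "\<lambda>ns w. mpl_term_dz2 ks i z1 w ns" and z = z2,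
      OF this mpl_term_has_field_derivative_z2[OF _ assms(3-5)] bound summable]
  show "mpl_term_dz2 ks i z1 z2 summable_on dec_tuples (length ks)"
    using termwise(1) .
  show "((\<lambda>w. Li2 ks i j z1 w) has_field_derivative
           infsum (mpl_term_dz2 ks i z1 z2) (dec_tuples (length ks))) (at z2)"
    using termwise(2) \<open>ks \<noteq> []\<close> by (simp add: Li2_eq_infsum)
qed

lemma Li2_has_field_derivative_z1_lower_k1:
  assumes "norm z1 < 1" and "z1 \<noteq> 0" and "norm z2 \<le> 1" and "ks \<noteq> []" and "0 < ks ! 0"
  shows "((\<lambda>w. Li2 ks i j w z2) has_field_derivative
           1 / z1 * Li2 (ks[0 := ks ! 0 - 1]) i j z1 z2) (at z1)"
proof -
  let ?ks' = "ks[0 := ks ! 0 - 1]"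
  have "mpl_term_dz1 ks i j z1 z2 ns = 1 / z1 * mpl_term ?ks' i j z1 z2 ns"
    if "ns \<in> dec_tuples (length ks)" for ns
  proof -
    have "0 < hd_or_zero ns"
      using that assms(4) by (cases ns) (auto simp: dec_tuples_def)
    then have "z1 ^ (hd_or_zero ns - 1) = z1 ^ hd_or_zero ns / z1"
      using assms(2) by (simp add: power_diff)
    then show ?thesis
      by (simp add: mpl_term_def mpl_term_dz1_def)
  qed
  then have "infsum (mpl_term_dz1 ks i j z1 z2) (dec_tuples (length ks)) =
      1 / z1 * infsum (mpl_term ?ks' i j z1 z2) (dec_tuples (length ks))"
    by (simp only: infsum_cmult_right' cong: infsum_cong)
  also have "\<dots> = 1 / z1 * Li2 ?ks' i j z1 z2"
    using assms(4) by (simp add: Li2_eq_infsum)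
  finally show ?thesis
    using Li2_has_field_derivative_z1(2)[OF assms(1,3-5), of i j] by (simp only:)
qed

lemma Li2_has_field_derivative_z2_lower_ki:
  assumes "norm z1 < 1" and "norm z2 < 1" and "z2 \<noteq> 0" and "i < length ks" and "0 < ks ! i"
    and "j \<noteq> 0"
  shows "((\<lambda>w. Li2 ks i j z1 w) has_field_derivative
           1 / z2 * Li2 (ks[i := ks ! i - 1]) i j z1 z2) (at z2)"
proof -
  let ?ks' = "ks[i := ks ! i - 1]"
  have ks_nonempty: "ks \<noteq> []"
    using assms(4) by auto
  have "mpl_term_dz2 ks i z1 z2 ns = 1 / z2 * mpl_term ?ks' i j z1 z2 ns"
    if "ns \<in> dec_tuples (length ks)" for ns
  proof -
    have "0 < ns ! i"
      using that assms(4) by (auto simp: dec_tuples_def)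
    then have "z2 ^ (ns ! i - 1) = z2 ^ (ns ! i) / z2"
      using assms(3) by (simp add: power_diff)
    then show ?thesis
      using assms(6) by (simp add: mpl_term_def mpl_term_dz2_def)
  qed
  then have "infsum (mpl_term_dz2 ks i z1 z2) (dec_tuples (length ks)) =
      1 / z2 * infsum (mpl_term ?ks' i j z1 z2) (dec_tuples (length ks))"
    by (simp only: infsum_cmult_right' cong: infsum_cong)
  also have "\<dots> = 1 / z2 * Li2 ?ks' i j z1 z2"
    using assms(4) by (simp add: Li2_eq_infsum ks_nonempty)
  finally show ?thesis
    using Li2_has_field_derivative_z2(2)[OF assms(1,2,4-6)] by (simp only:)
qed

lemma Li2_has_field_derivative_z1_k1_eq_1_i0:
  assumes "norm z1 < 1" and "norm z2 < 1"
  shows "((\<lambda>w. Li2 (1 # ks) 0 (Suc (length ks)) w z2) has_field_derivative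
           z2 / (1 - z1 * z2) * Li2 ks 0 (length ks) z1 z2) (at z1)"
proof -
  let ?m = "length ks"
  have "norm z1 * norm z2 \<le> norm z1"
    using assms(2) by (simp add: mult_left_le)
  then have q: "norm (z1 * z2) < 1"
    using assms(1) by (simp add: norm_mult)
  note deriv = Li2_has_field_derivative_z1[OF assms(1) less_imp_le[OF assms(2)], of "1 # ks" 0 "Suc ?m"]
  have "mpl_term_dz1 (1 # ks) 0 (Suc ?m) z1 z2 (n # t) = (z1 * z2) ^ (n - 1) * (z2 / mpl_denom ks t)"
    if "hd_or_zero t < n" for n t
    using that by (cases n) (auto simp: mpl_term_dz1_def power_mult_distrib)
  then have "infsum (mpl_term_dz1 (1 # ks) 0 (Suc ?m) z1 z2) (dec_tuples (Suc ?m)) =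
      1 / (1 - z1 * z2) * (\<Sum>\<^sub>\<infinity>t\<in>dec_tuples ?m. (z1 * z2) ^ hd_or_zero t * (z2 / mpl_denom ks t))"
    using deriv(1) by (intro infsum_dec_tuples_Suc_geometric_head[OF q]) simp_all
  also have "(\<Sum>\<^sub>\<infinity>t\<in>dec_tuples ?m. (z1 * z2) ^ hd_or_zero t * (z2 / mpl_denom ks t)) =
      (\<Sum>\<^sub>\<infinity>t\<in>dec_tuples ?m. z2 * mpl_term ks 0 ?m z1 z2 t)"
  proof (rule infsum_cong)
    fix t assume "t \<in> dec_tuples ?m"
    then have "?m \<noteq> 0 \<Longrightarrow> t ! 0 = hd_or_zero t" and "?m = 0 \<Longrightarrow> t = []"
      by (auto simp: dec_tuples_def hd_or_zero_def hd_conv_nth)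
    then show "(z1 * z2) ^ hd_or_zero t * (z2 / mpl_denom ks t) = z2 * mpl_term ks 0 ?m z1 z2 t"
      by (cases "?m = 0") (auto simp: mpl_term_def power_mult_distrib hd_or_zero_def)
  qed
  also have "\<dots> = z2 * Li2 ks 0 ?m z1 z2"
    by (simp add: infsum_cmult_right' Li2_eq_infsum)
  finally show ?thesis
    using deriv(2) by simp
qed

lemma Li2_has_field_derivative_z1_k1_eq_1:
  assumes "norm z1 < 1" and "norm z2 < 1" and "0 < i" and "Suc (length ks) = i + j"
  shows "((\<lambda>w. Li2 (1 # ks) i j w z2) has_field_derivative
           1 / (1 - z1) * Li2 ks (i - 1) j z1 z2) (at z1)"
proof -
  let ?m = "length ks"
  define g where "g t = (if j = 0 then 1 else z2 ^ (t ! (i - 1))) / mpl_denom ks t" for t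
  note deriv = Li2_has_field_derivative_z1[OF assms(1) less_imp_le[OF assms(2)], of "1 # ks" i j]
  have "mpl_term_dz1 (1 # ks) i j z1 z2 (n # t) = z1 ^ (n - 1) * g t" for n t
    using assms(3) by (simp add: mpl_term_dz1_def g_def nth_Cons')
  then have "infsum (mpl_term_dz1 (1 # ks) i j z1 z2) (dec_tuples (Suc ?m)) =
      1 / (1 - z1) * (\<Sum>\<^sub>\<infinity>t\<in>dec_tuples ?m. z1 ^ hd_or_zero t * g t)"
    using deriv(1) by (intro infsum_dec_tuples_Suc_geometric_head[OF assms(1)]) simp_all
  also have "(\<lambda>t. z1 ^ hd_or_zero t * g t) = mpl_term ks (i - 1) j z1 z2"
    by (simp add: fun_eq_iff mpl_term_def g_def)
  also have "infsum (mpl_term ks (i - 1) j z1 z2) (dec_tuples ?m) = Li2 ks (i - 1) j z1 z2"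
    using assms(3,4) by (subst Li2_eq_infsum) auto
  finally show ?thesis
    using deriv(2) by simp
qed

lemma Li2_has_field_derivative_z2_k1_eq_1_i0:
  assumes "norm z1 < 1" and "norm z2 < 1"
  shows "((\<lambda>w. Li2 (1 # ks) 0 (Suc (length ks)) z1 w) has_field_derivative
           z1 / (1 - z1 * z2) * Li2 ks 0 (length ks) z1 z2) (at z2)"
proof -
  have "Li2 (1 # ks) 0 (Suc (length ks)) z1 w = Li2 (1 # ks) 0 (Suc (length ks)) w z1" for w
    by (rule Li2_0_commute) simp
  moreover have "Li2 ks 0 (length ks) z2 z1 = Li2 ks 0 (length ks) z1 z2"
    by (rule Li2_0_commute) auto
  ultimately show ?thesis
    using Li2_has_field_derivative_z1_k1_eq_1_i0[OF assms(2,1), of ks] by (simp add: mult.commute)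
qed

lemma has_sum_mpl_term_dz2_insertion_range:
  assumes "z2 \<noteq> 0" and "z2 \<noteq> 1" and "0 < i" and "j \<noteq> 0" and "length ks = i + j"
    and "ks ! i = 1" and t: "t \<in> dec_tuples (i + j - 1)"
  shows "((\<lambda>n. mpl_term_dz2 ks i z1 z2 (insert_nth i n t)) has_sum
           1 / (1 - z2) * (mpl_term (remove_nth i ks) i (j - 1) z1 z2 t
             - 1 / z2 * mpl_term (remove_nth i ks) (i - 1) j z1 z2 t)) (insertion_range i t)"
proof -
  define kp where "kp = remove_nth i ks"
  define lo where "lo = (if i < length t then t ! i else 0)"
  define hi where "hi = t ! (i - 1)"
  define Z where "Z = z1 ^ hd_or_zero t / mpl_denom kp t"
  have len_t: "length t = i + j - 1" and "t \<noteq> []" and "0 < hi"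
    using t assms(3,4) by (auto simp: dec_tuples_def hi_def)
  have range: "insertion_range i t = {lo<..<hi}"
    using assms(3) by (auto simp: insertion_range_def lo_def hi_def)
  have "lo < hi"
    using t assms(3) \<open>0 < hi\<close> by (auto simp: lo_def hi_def dec_tuples_def sorted_wrt_iff_nth_less)
  have "mpl_term_dz2 ks i z1 z2 (insert_nth i n t) = z2 ^ (n - 1) * Z" for n
    using mpl_denom_insert_nth[of "ks[i := 0]" t i n] assms(3-6) len_t \<open>t \<noteq> []\<close>
    by (simp add: mpl_term_dz2_def Z_def kp_def hd_or_zero_insert_nth)
  then have "(\<Sum>n\<in>insertion_range i t. mpl_term_dz2 ks i z1 z2 (insert_nth i n t)) =
      (\<Sum>n\<in>{lo<..<hi}. z2 ^ (n - 1)) * Z"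
    by (simp add: range sum_distrib_right)
  also have "\<dots> = (z2 ^ lo - z2 ^ (hi - 1)) / (1 - z2) * Z"
    using \<open>z2 \<noteq> 1\<close> \<open>lo < hi\<close> by (subst sum_geometric_greaterThanLessThan) simp_all
  also have "\<dots> = 1 / (1 - z2) * (mpl_term kp i (j - 1) z1 z2 t - 1 / z2 * mpl_term kp (i - 1) j z1 z2 t)"
  proof -
    have "mpl_term kp i (j - 1) z1 z2 t = z2 ^ lo * Z"
      using len_t by (auto simp: lo_def Z_def mpl_term_def)
    moreover have "mpl_term kp (i - 1) j z1 z2 t = z2 * z2 ^ (hi - 1) * Z"
      using \<open>0 < hi\<close> assms(4) by (simp add: hi_def Z_def mpl_term_def power_eq_if)
    ultimately show ?thesis
      using assms(1) by (simp add: field_simps)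
  qed
  finally have "(\<Sum>n\<in>insertion_range i t. mpl_term_dz2 ks i z1 z2 (insert_nth i n t)) =
      1 / (1 - z2) * (mpl_term kp i (j - 1) z1 z2 t - 1 / z2 * mpl_term kp (i - 1) j z1 z2 t)" .
  moreover have "finite (insertion_range i t)"
    by (simp add: range)
  ultimately show ?thesis
    unfolding kp_def by (intro has_sum_finiteI) simp_all
qed

lemma Li2_has_field_derivative_z2_ki_eq_1:
  assumes "norm z1 < 1" and "norm z2 < 1" and "z2 \<noteq> 0" and "0 < i" and "j \<noteq> 0"
    and "length ks = i + j" and "ks ! i = 1"
  shows "((\<lambda>w. Li2 ks i j z1 w) has_field_derivative
           1 / (1 - z2) * Li2 (remove_nth i ks) i (j - 1) z1 z2
           - 1 / (1 - z2) * Li2 (remove_nth i ks) (i - 1) j z1 z2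
           - 1 / z2 * Li2 (remove_nth i ks) (i - 1) j z1 z2) (at z2)"
proof -
  define m where "m = i + j - 1"
  define kp where "kp = remove_nth i ks"
  have "length ks = Suc m" and "length kp = m" and "kp \<noteq> []" and "i \<le> m"
    using assms(4-6) by (auto simp: m_def kp_def remove_nth_def)
  have "z2 \<noteq> 1"
    using assms(2) by auto
  have "i < length ks" and "0 < ks ! i"
    using assms(5-7) by auto
  note deriv = Li2_has_field_derivative_z2[OF assms(1,2) this assms(5)]
  have "infsum (mpl_term_dz2 ks i z1 z2) (dec_tuples (Suc m)) =
      (\<Sum>\<^sub>\<infinity>t\<in>dec_tuples m. \<Sum>\<^sub>\<infinity>n\<in>insertion_range i t. mpl_term_dz2 ks i z1 z2 (insert_nth i n t))"
    using infsum_dec_tuples_Suc[OF \<open>i \<le> m\<close>] deriv(1) \<open>length ks = Suc m\<close> assms(7) by simp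
  also have "\<dots> = (\<Sum>\<^sub>\<infinity>t\<in>dec_tuples m.
      1 / (1 - z2) * (mpl_term kp i (j - 1) z1 z2 t - 1 / z2 * mpl_term kp (i - 1) j z1 z2 t))"
    using has_sum_mpl_term_dz2_insertion_range[OF assms(3) \<open>z2 \<noteq> 1\<close> assms(4-7)]
    by (intro infsum_cong infsumI) (simp add: m_def kp_def)
  also have "\<dots> = 1 / (1 - z2) * (Li2 kp i (j - 1) z1 z2 - 1 / z2 * Li2 kp (i - 1) j z1 z2)"
    using \<open>kp \<noteq> []\<close> assms(1,2) unfolding \<open>length kp = m\<close>[symmetric]
    by (intro infsumI has_sum_cmult_right has_sum_diff has_sum_Li2) auto
  also have "\<dots> = 1 / (1 - z2) * Li2 kp i (j - 1) z1 z2 - 1 / (1 - z2) * Li2 kp (i - 1) j z1 z2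
      - 1 / z2 * Li2 kp (i - 1) j z1 z2"
    using assms(3) \<open>z2 \<noteq> 1\<close> by (simp add: divide_simps) (simp add: algebra_simps)
  finally show ?thesis
    using deriv(2) \<open>length ks = Suc m\<close> assms(7) by (simp add: kp_def)
qed

theorem proposition7p1:
  fixes ks :: "nat list" and i j :: nat and z1 z2 :: complex
  assumes "norm z1 < 1" and "norm z2 < 1"
    and "length ks = i + j" and "\<forall>k\<in>set ks. 1 \<le> k" and "1 \<le> i + j"
  shows
   "(i = 0 \<and> ks ! 0 = 1 \<longrightarrow>
       ((\<lambda>w. Li2 ks i j w z2) has_field_derivative
          (z2 / (1 - z1 * z2) * Li2 (tl ks) 0 (j - 1) z1 z2)) (at z1)) \<and>
    (i > 0 \<and> ks ! 0 = 1 \<longrightarrow>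
       ((\<lambda>w. Li2 ks i j w z2) has_field_derivative
          (1 / (1 - z1) * Li2 (tl ks) (i - 1) j z1 z2)) (at z1)) \<and>
    (ks ! 0 > 1 \<and> z1 \<noteq> 0 \<longrightarrow>
       ((\<lambda>w. Li2 ks i j w z2) has_field_derivative
          (1 / z1 * Li2 (ks[0 := ks ! 0 - 1]) i j z1 z2)) (at z1)) \<and>
    (j \<ge> 1 \<longrightarrow>
      (i = 0 \<and> ks ! 0 = 1 \<longrightarrow>
         ((\<lambda>w. Li2 ks i j z1 w) has_field_derivative
            (z1 / (1 - z1 * z2) * Li2 (tl ks) 0 (j - 1) z1 z2)) (at z2)) \<and>
      (i > 0 \<and> ks ! i = 1 \<and> z2 \<noteq> 0 \<longrightarrow>
         ((\<lambda>w. Li2 ks i j z1 w) has_field_derivative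
            (1 / (1 - z2) * Li2 (take i ks @ drop (i + 1) ks) i (j - 1) z1 z2
             - 1 / (1 - z2) * Li2 (take i ks @ drop (i + 1) ks) (i - 1) j z1 z2
             - 1 / z2 * Li2 (take i ks @ drop (i + 1) ks) (i - 1) j z1 z2)) (at z2)) \<and>
      (ks ! i > 1 \<and> z2 \<noteq> 0 \<longrightarrow>
         ((\<lambda>w. Li2 ks i j z1 w) has_field_derivative
            (1 / z2 * Li2 (ks[i := ks ! i - 1]) i j z1 z2)) (at z2)))"
proof -
  have "ks \<noteq> []"
    using assms(3,5) by auto
  then have head: "ks = 1 # tl ks" if "ks ! 0 = 1"
    using that by (cases ks) auto
  have len_tl: "Suc (length (tl ks)) = i + j"
    using assms(3,5) by simp
  have "norm z2 \<le> 1"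
    using assms(2) by simp
  show ?thesis
    apply (intro conjI impI)
    subgoal
      using Li2_has_field_derivative_z1_k1_eq_1_i0[OF assms(1,2), of "tl ks"] head len_tl by auto
    subgoal
      using Li2_has_field_derivative_z1_k1_eq_1[OF assms(1,2) _ len_tl] head by auto
    subgoal
      using Li2_has_field_derivative_z1_lower_k1[OF assms(1) _ \<open>norm z2 \<le> 1\<close> \<open>ks \<noteq> []\<close>] by auto
    subgoal
      using Li2_has_field_derivative_z2_k1_eq_1_i0[OF assms(1,2), of "tl ks"] head len_tl by auto
    subgoal
      using Li2_has_field_derivative_z2_ki_eq_1[OF assms(1,2) _ _ _ assms(3)]
      by (simp add: remove_nth_def)
    subgoal
      using Li2_has_field_derivative_z2_lower_ki[OF assms(1,2)] assms(3) by auto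
    done
qed

end
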